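(* Let $G$ be a graph and $uv\in E(G)$. Let $W_1=N(u)\setminus N[v]$, $W_2=N(u)\cap N(v)$, $W_3=N(v)\setminus N[u]$ and $W_4=V(G)\setminus (N[u]\cup N[v])$. Suppose there is no maximal induced matching $M$ of $G$ with $V(M)\subseteq W_1\cup W_4$ and $V(M)\cap W_1\ne\emptyset$, and there is no maximal induced matching $M$ of $G$ with $V(M)\subseteq W_3\cup W_4$ and $V(M)\cap W_3\neq\emptyset$. Then $|M_{G_{u\to v}}|\ge |M_G|$ or $|M_{G_{v\to u}}|\ge |M_G|$.
   Context: Graphs are finite, simple, undirected. $N(x)$, $N[x]$ are the open and closed neighborhoods. An induced matching is a matching whose endpoints induce a $1$-regular subgraph; it is maximal if not properly contained in another induced matching; $M_G$ is the set of maximal induced matchings of $G$; $V(M)$ is the set of vertices covered by $M$. For $uv\in E(G)$, $G_{v\to u}$ is the graph obtained from $G$ by deleting the edge $vx$ for every $x\in N(v)\setminus N[u]$ and adding the edge $vy$ for every $y\in N(u)\setminus N[v]$ (so that $N[v]=N[u]$ afterwards); $G_{u\to v}$ is defined symmetrically. *)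

theory Defs
  imports Main
begin

definition simple_graph :: "'a set \<Rightarrow> 'a set set \<Rightarrow> bool" where
  "simple_graph V E \<longleftrightarrow> finite V \<and> (\<forall>e\<in>E. \<exists>x y. x \<noteq> y \<and> e = {x, y} \<and> x \<in> V \<and> y \<in> V)"

definition nbhd :: "'a set set \<Rightarrow> 'a \<Rightarrow> 'a set" where
  "nbhd E x = {y. {x, y} \<in> E}"

definition cnbhd :: "'a set set \<Rightarrow> 'a \<Rightarrow> 'a set" where
  "cnbhd E x = insert x (nbhd E x)"

definition covered :: "'a set set \<Rightarrow> 'a set" where
  "covered M = \<Union>M"

definition matching :: "'a set set \<Rightarrow> 'a set set \<Rightarrow> bool" where
  "matching E M \<longleftrightarrow> M \<subseteq> E \<and> (\<forall>e\<in>M. \<forall>f\<in>M. e \<noteq> f \<longrightarrow> e \<inter> f = {})"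

definition induced_matching :: "'a set set \<Rightarrow> 'a set set \<Rightarrow> bool" where
  "induced_matching E M \<longleftrightarrow> matching E M \<and>
     (\<forall>x\<in>covered M. card (nbhd E x \<inter> covered M) = 1)"

definition maximal_induced_matching :: "'a set set \<Rightarrow> 'a set set \<Rightarrow> bool" where
  "maximal_induced_matching E M \<longleftrightarrow> induced_matching E M \<and>
     \<not> (\<exists>M'. induced_matching E M' \<and> M \<subset> M')"

definition MIM :: "'a set set \<Rightarrow> 'a set set set" where
  "MIM E = {M. maximal_induced_matching E M}"

text \<open>G_{v->u}: delete vx for x in N(v) \ N[u], add vy for y in N(u) \ N[v]
  (vertex set unchanged; only the edge set changes).\<close>
definition shift :: "'a set set \<Rightarrow> 'a \<Rightarrow> 'a \<Rightarrow> 'a set set" where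
  "shift E v u = (E - {{v, x} | x. x \<in> nbhd E v - cnbhd E u})
                  \<union> {{v, y} | y. y \<in> nbhd E u - cnbhd E v}"

end

theory Submission
  imports Defs "HOL-Combinatorics.Transposition"
begin

text \<open>Split the maximal induced matchings M of G by which of u, v they cover: u only, v only,
  neither, or both (and then uv \<in> M). In H = G_{u->v} the vertices u and v are closed twins,
  so swapping them is an automorphism of H. A matching covering v but not u stays maximal in H,
  and so does one covering neither, because by the hypothesis on W1 \<union> W4 it covers a neighbour
  of v, which is an H-neighbour of u blocking every new edge at u; the swap turns the first kind
  into matchings covering u only. A matching containing uv extends to a maximal induced matching
  of H, and injectively, since G and H induce the same graph on the vertices covered by any two
  such matchings. Hence
  |M_H| \<ge> |both| + 2 |v only| + |neither|, symmetrically for G_{v->u} with u only, and the sum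
  of the two bounds is 2 |M_G|.\<close>

lemma simple_graph_edgeE:
  assumes "simple_graph V E" "e \<in> E" "x \<in> e"
  obtains y where "y \<noteq> x" "e = {x, y}"
proof -
  obtain a b where "a \<noteq> b" "e = {a, b}"
    using assms(1,2) unfolding simple_graph_def by blast
  then show thesis
    using that assms(3) by (metis empty_iff insertE insert_commute)
qed

lemma simple_graph_no_loop: "simple_graph V E \<Longrightarrow> {x} \<notin> E"
  unfolding simple_graph_def by auto

lemma simple_graph_edge_subset: "simple_graph V E \<Longrightarrow> e \<in> E \<Longrightarrow> e \<subseteq> V"
  unfolding simple_graph_def by fastforce

lemma simple_graph_finite_edges:
  assumes "simple_graph V E"
  shows "finite E"
proof -
  have "E \<subseteq> Pow V" "finite V"
    using assms unfolding simple_graph_def by auto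
  then show ?thesis
    by (meson finite_Pow_iff finite_subset)
qed

lemma covered_subset_vertices: "simple_graph V E \<Longrightarrow> M \<subseteq> E \<Longrightarrow> covered M \<subseteq> V"
  unfolding covered_def using simple_graph_edge_subset by blast

lemma edge_subset_covered: "e \<in> M \<Longrightarrow> e \<subseteq> covered M"
  unfolding covered_def by blast

lemma finite_MIM: "finite E \<Longrightarrow> finite (MIM E)"
  unfolding MIM_def maximal_induced_matching_def induced_matching_def matching_def
  by (rule finite_subset[of _ "Pow E"]) blast+

lemma matching_edge_unique:
  "matching E M \<Longrightarrow> e \<in> M \<Longrightarrow> f \<in> M \<Longrightarrow> x \<in> e \<Longrightarrow> x \<in> f \<Longrightarrow> e = f"
  unfolding matching_def by blast

lemma induced_matching_iff:
  assumes G: "simple_graph V E"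
  shows "induced_matching E M \<longleftrightarrow>
    matching E M \<and> (\<forall>x\<in>covered M. \<forall>y\<in>covered M. {x, y} \<in> E \<longrightarrow> {x, y} \<in> M)"
proof
  assume im: "induced_matching E M"
  have "{x, y} \<in> M" if xy: "x \<in> covered M" "y \<in> covered M" "{x, y} \<in> E" for x y
  proof -
    obtain e where e: "e \<in> M" "x \<in> e" using xy(1) unfolding covered_def by blast
    then have "e \<in> E" using im unfolding induced_matching_def matching_def by blast
    then obtain z where z: "e = {x, z}" using simple_graph_edgeE[OF G _ e(2)] by blast
    then have "{y, z} \<subseteq> nbhd E x \<inter> covered M"
      using xy im e unfolding induced_matching_def matching_def nbhd_def covered_def by auto
    moreover obtain w where "nbhd E x \<inter> covered M = {w}"
      using im xy(1) card_1_singletonE unfolding induced_matching_def by blast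
    ultimately have "y = z" by auto
    then show ?thesis using e z by simp
  qed
  then show "matching E M \<and> (\<forall>x\<in>covered M. \<forall>y\<in>covered M. {x, y} \<in> E \<longrightarrow> {x, y} \<in> M)"
    using im unfolding induced_matching_def by blast
next
  assume M: "matching E M \<and> (\<forall>x\<in>covered M. \<forall>y\<in>covered M. {x, y} \<in> E \<longrightarrow> {x, y} \<in> M)"
  have "nbhd E x \<inter> covered M = {y}" if e: "e \<in> M" "e = {x, y}" "y \<noteq> x" for e x y
  proof -
    have "z = y" if z: "{x, z} \<in> E" "z \<in> covered M" for z
    proof -
      have "x \<in> covered M" using e unfolding covered_def by blast
      then have "{x, z} \<in> M" using M z by blast
      then have "{x, z} = e" using M e matching_edge_unique[of E M "{x, z}" e x] by blast
      moreover have "z \<noteq> x" using z(1) simple_graph_no_loop[OF G, of x] by auto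
      ultimately show ?thesis using e by (auto simp: doubleton_eq_iff)
    qed
    moreover have "{x, y} \<in> E" "y \<in> covered M"
      using M e unfolding matching_def covered_def by auto
    ultimately show ?thesis unfolding nbhd_def by blast
  qed
  moreover have "\<exists>e y. e \<in> M \<and> e = {x, y} \<and> y \<noteq> x" if x: "x \<in> covered M" for x
  proof -
    obtain e where e: "e \<in> M" "x \<in> e" using x unfolding covered_def by blast
    then have "e \<in> E" using M unfolding matching_def by blast
    then show ?thesis using simple_graph_edgeE[OF G _ e(2)] e(1) by metis
  qed
  ultimately show "induced_matching E M"
    using M unfolding induced_matching_def by (metis is_singletonI is_singleton_altdef)
qed

lemma induced_matching_subset:
  assumes G: "simple_graph V E" and im: "induced_matching E M'" and sub: "M \<subseteq> M'"
  shows "induced_matching E M"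
proof -
  have M': "matching E M'" "\<forall>x\<in>covered M'. \<forall>y\<in>covered M'. {x, y} \<in> E \<longrightarrow> {x, y} \<in> M'"
    using im induced_matching_iff[OF G] by blast+
  have "{x, y} \<in> M" if xy: "x \<in> covered M" "y \<in> covered M" "{x, y} \<in> E" for x y
  proof -
    obtain e where e: "e \<in> M" "x \<in> e" using xy(1) unfolding covered_def by blast
    have "covered M \<subseteq> covered M'" using sub unfolding covered_def by blast
    then have "{x, y} \<in> M'" using M'(2) xy by blast
    then have "{x, y} = e" using matching_edge_unique[OF M'(1) _ _ _ e(2)] e(1) sub by blast
    then show ?thesis using e(1) by simp
  qed
  moreover have "matching E M" using M'(1) sub unfolding matching_def by blast
  ultimately show ?thesis using induced_matching_iff[OF G] by blast
qed

lemma induced_matching_insert: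
  assumes G: "simple_graph V E" and im: "induced_matching E M" and "e \<in> E"
    and apart: "\<forall>x\<in>e. \<forall>y\<in>covered M. {x, y} \<notin> E"
  shows "induced_matching E (insert e M)"
proof -
  have M: "matching E M" "\<forall>x\<in>covered M. \<forall>y\<in>covered M. {x, y} \<in> E \<longrightarrow> {x, y} \<in> M"
    using im induced_matching_iff[OF G] by blast+
  have cov: "covered (insert e M) = e \<union> covered M" unfolding covered_def by simp
  have "x \<notin> covered M" if "x \<in> e" for x
  proof
    assume "x \<in> covered M"
    then obtain f where f: "f \<in> M" "x \<in> f" unfolding covered_def by blast
    then have "f \<in> E" using M(1) unfolding matching_def by blast
    then obtain y where "f = {x, y}" using simple_graph_edgeE[OF G _ f(2)] by blast
    then have "{x, y} \<in> E" "y \<in> covered M" using \<open>f \<in> E\<close> edge_subset_covered[OF f(1)] by auto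
    then show False using apart that by blast
  qed
  then have "matching E (insert e M)"
    using M(1) \<open>e \<in> E\<close> unfolding matching_def covered_def by blast
  moreover have "{x, y} \<in> insert e M"
    if xy: "x \<in> covered (insert e M)" "y \<in> covered (insert e M)" "{x, y} \<in> E" for x y
  proof -
    have "\<not> (x \<in> e \<and> y \<in> covered M)" "\<not> (y \<in> e \<and> x \<in> covered M)"
      using apart xy(3) by (auto simp: insert_commute)
    then consider "x \<in> covered M" "y \<in> covered M" | "x \<in> e" "y \<in> e"
      using xy(1,2) cov by blast
    then show ?thesis
    proof cases
      case 1
      then show ?thesis using M(2) xy(3) by blast
    next
      case 2
      obtain a b where "e = {a, b}" using G \<open>e \<in> E\<close> unfolding simple_graph_def by blast
      moreover have "x \<noteq> y" using xy(3) simple_graph_no_loop[OF G, of x] by auto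
      ultimately show ?thesis using 2 by auto
    qed
  qed
  ultimately show ?thesis using induced_matching_iff[OF G] by blast
qed

lemma induced_matching_cong:
  assumes G: "simple_graph V E" and H: "simple_graph V' H"
    and agree: "\<forall>x\<in>covered M. \<forall>y\<in>covered M. {x, y} \<in> E \<longleftrightarrow> {x, y} \<in> H"
  shows "induced_matching E M \<longleftrightarrow> induced_matching H M"
proof -
  have transfer: "induced_matching E2 M"
    if G1: "simple_graph V1 E1" and G2: "simple_graph V2 E2" and im: "induced_matching E1 M"
      and agree: "\<forall>x\<in>covered M. \<forall>y\<in>covered M. {x, y} \<in> E1 \<longleftrightarrow> {x, y} \<in> E2"
    for V1 V2 E1 E2
  proof -
    have M: "matching E1 M" "\<forall>x\<in>covered M. \<forall>y\<in>covered M. {x, y} \<in> E1 \<longrightarrow> {x, y} \<in> M"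
      using im induced_matching_iff[OF G1] by blast+
    have "e \<in> E2" if "e \<in> M" for e
    proof -
      have "e \<in> E1" using M(1) that unfolding matching_def by blast
      then obtain x y where "e = {x, y}" using G1 unfolding simple_graph_def by blast
      then show ?thesis using agree \<open>e \<in> E1\<close> edge_subset_covered[OF that] by blast
    qed
    then have "matching E2 M" using M(1) unfolding matching_def by blast
    then show ?thesis using M(2) agree induced_matching_iff[OF G2] by blast
  qed
  have "\<forall>x\<in>covered M. \<forall>y\<in>covered M. {x, y} \<in> H \<longleftrightarrow> {x, y} \<in> E"
    using agree by simp
  then show ?thesis
    using transfer[OF G H _ agree] transfer[OF H G] by blast
qed

lemma induced_matching_edge_isolated:
  assumes G: "simple_graph V E" and im: "induced_matching E M" and uv: "{u, v} \<in> M"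
    and z: "z \<in> covered M" "z \<noteq> u" "z \<noteq> v"
  shows "{u, z} \<notin> E \<and> {v, z} \<notin> E"
proof -
  have M: "matching E M" "\<forall>x\<in>covered M. \<forall>y\<in>covered M. {x, y} \<in> E \<longrightarrow> {x, y} \<in> M"
    using im induced_matching_iff[OF G] by blast+
  have "{x, z} \<notin> E" if x: "x \<in> {u, v}" for x
  proof
    assume "{x, z} \<in> E"
    moreover have "x \<in> covered M" using x uv edge_subset_covered by blast
    ultimately have xz: "{x, z} \<in> M" using M(2) z(1) by blast
    have "{x, z} = {u, v}" using matching_edge_unique[OF M(1) xz uv, of x] x by simp
    then show False using x z(2,3) by (auto simp: doubleton_eq_iff)
  qed
  then show ?thesis by simp
qed

lemma maximal_induced_matchingD:
  "maximal_induced_matching E M \<Longrightarrow> induced_matching E N \<Longrightarrow> M \<subseteq> N \<Longrightarrow> N = M"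
  unfolding maximal_induced_matching_def by blast

lemma maximal_induced_matching_extend:
  assumes "finite E" and "induced_matching E M"
  obtains M' where "M \<subseteq> M'" and "maximal_induced_matching E M'"
proof -
  let ?S = "{M'. induced_matching E M' \<and> M \<subseteq> M'}"
  have "?S \<subseteq> Pow E" unfolding induced_matching_def matching_def by auto
  then have "finite ?S" using assms(1) by (meson finite_Pow_iff finite_subset)
  moreover have "M \<in> ?S" using assms(2) by simp
  ultimately obtain M' where M': "M' \<in> ?S" "\<forall>N\<in>?S. M' \<le> N \<longrightarrow> M' = N"
    by (meson finite_has_maximal2)
  then have "maximal_induced_matching E M'"
    unfolding maximal_induced_matching_def by auto
  with M' show thesis by (intro that) auto
qed

lemma covered_image: "covered ((`) f ` M) = f ` covered M"
  unfolding covered_def by auto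

lemma induced_matching_image:
  assumes G: "simple_graph V E" and "inj f" and aut: "\<And>x y. {f x, f y} \<in> E \<longleftrightarrow> {x, y} \<in> E"
    and im: "induced_matching E M"
  shows "induced_matching E ((`) f ` M)"
proof -
  have M: "matching E M" "\<forall>x\<in>covered M. \<forall>y\<in>covered M. {x, y} \<in> E \<longrightarrow> {x, y} \<in> M"
    using im induced_matching_iff[OF G] by blast+
  have "f ` e \<in> E" if "e \<in> M" for e
  proof -
    have "e \<in> E" using M(1) that unfolding matching_def by blast
    then obtain x y where "e = {x, y}" using G unfolding simple_graph_def by blast
    then show ?thesis using aut \<open>e \<in> E\<close> by simp
  qed
  moreover have "f ` e \<inter> f ` e' = {}" if "e \<in> M" "e' \<in> M" "f ` e \<noteq> f ` e'" for e e'
  proof -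
    have "e \<noteq> e'" using that(3) by blast
    then have "e \<inter> e' = {}" using M(1) that(1,2) unfolding matching_def by blast
    then show ?thesis using \<open>inj f\<close> by (simp add: image_Int[symmetric])
  qed
  ultimately have "matching E ((`) f ` M)" unfolding matching_def by blast
  moreover have "{x', y'} \<in> (`) f ` M"
    if xy': "x' \<in> covered ((`) f ` M)" "y' \<in> covered ((`) f ` M)" "{x', y'} \<in> E" for x' y'
  proof -
    obtain x y where "x \<in> covered M" "y \<in> covered M" "x' = f x" "y' = f y"
      using xy'(1,2) unfolding covered_image by blast
    moreover have "{x, y} \<in> E" using aut xy'(3) \<open>x' = f x\<close> \<open>y' = f y\<close> by simp
    ultimately have "{x, y} \<in> M" using M(2) by blast
    moreover have "f ` {x, y} = {x', y'}" using \<open>x' = f x\<close> \<open>y' = f y\<close> by simp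
    ultimately show ?thesis by (metis image_eqI)
  qed
  ultimately show ?thesis using induced_matching_iff[OF G] by blast
qed

lemma edge_image_involution: "(\<And>x. f (f x) = x) \<Longrightarrow> (`) f ` (`) f ` N = N"
  by (simp add: image_image)

lemma maximal_induced_matching_image:
  assumes G: "simple_graph V E" and inv: "\<And>x. f (f x) = x"
    and aut: "\<And>x y. {f x, f y} \<in> E \<longleftrightarrow> {x, y} \<in> E"
    and M: "maximal_induced_matching E M"
  shows "maximal_induced_matching E ((`) f ` M)"
proof -
  have "inj f" by (metis inv injI)
  note involution = edge_image_involution[of f, OF inv]
  have "induced_matching E ((`) f ` M)"
    using M induced_matching_image[OF G \<open>inj f\<close> aut] unfolding maximal_induced_matching_def by blast
  moreover have "N = (`) f ` M" if "induced_matching E N" "(`) f ` M \<subseteq> N" for N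
  proof -
    have "(`) f ` N = M"
      using maximal_induced_matchingD[OF M induced_matching_image[OF G \<open>inj f\<close> aut that(1)]]
        image_mono[OF that(2), of "(`) f"] involution by simp
    then show ?thesis using involution by metis
  qed
  ultimately show ?thesis unfolding maximal_induced_matching_def by blast
qed

lemma twins_transpose_edge_iff:
  assumes G: "simple_graph V E" and twins: "\<And>w. w \<noteq> u \<Longrightarrow> w \<noteq> v \<Longrightarrow> {u, w} \<in> E \<longleftrightarrow> {v, w} \<in> E"
  shows "{transpose u v x, transpose u v y} \<in> E \<longleftrightarrow> {x, y} \<in> E"
proof (cases "x \<in> {u, v}"; cases "y \<in> {u, v}")
  assume "x \<notin> {u, v}" "y \<notin> {u, v}"
  then show ?thesis by simp
next
  assume "x \<in> {u, v}" "y \<in> {u, v}"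
  then show ?thesis using simple_graph_no_loop[OF G] by (auto simp: insert_commute)
next
  assume "x \<in> {u, v}" "y \<notin> {u, v}"
  then show ?thesis using twins[of y] by auto
next
  assume "x \<notin> {u, v}" "y \<in> {u, v}"
  then show ?thesis using twins[of x] by (auto simp: insert_commute)
qed

definition MIM_class :: "'a set set \<Rightarrow> 'a \<Rightarrow> 'a \<Rightarrow> bool \<Rightarrow> bool \<Rightarrow> 'a set set set" where
  "MIM_class E u v p q = {M \<in> MIM E. (u \<in> covered M \<longleftrightarrow> p) \<and> (v \<in> covered M \<longleftrightarrow> q)}"

lemma MIM_class_commute: "MIM_class E v u q p = MIM_class E u v p q"
  unfolding MIM_class_def by auto

lemma card_MIM_classes:
  assumes "finite (MIM E)"
  shows "card (MIM E) = card (MIM_class E u v True True) + card (MIM_class E u v True False)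
    + card (MIM_class E u v False True) + card (MIM_class E u v False False)"
proof -
  let ?C = "MIM_class E u v"
  have split: "?C p True \<union> ?C p False = {M \<in> MIM E. u \<in> covered M \<longleftrightarrow> p}" for p
    unfolding MIM_class_def by auto
  have "MIM E = {M \<in> MIM E. u \<in> covered M \<longleftrightarrow> True} \<union> {M \<in> MIM E. u \<in> covered M \<longleftrightarrow> False}"
    by auto
  then have "card (MIM E) = card ((?C True True \<union> ?C True False) \<union> (?C False True \<union> ?C False False))"
    by (simp only: split)
  also have "\<dots> = card (?C True True \<union> ?C True False) + card (?C False True \<union> ?C False False)"
    by (rule card_Un_disjoint) (auto simp: assms MIM_class_def)
  also have "\<dots> = card (?C True True) + card (?C True False) + (card (?C False True) + card (?C False False))"
    by (subst (1 2) card_Un_disjoint) (auto simp: assms MIM_class_def)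
  finally show ?thesis by simp
qed

lemma card_MIM_class_twins:
  assumes G: "simple_graph V E" and twins: "\<And>w. w \<noteq> u \<Longrightarrow> w \<noteq> v \<Longrightarrow> {u, w} \<in> E \<longleftrightarrow> {v, w} \<in> E"
  shows "card (MIM_class E u v p q) = card (MIM_class E u v q p)"
proof -
  let ?\<sigma> = "(`) ((`) (transpose u v))"
  have maps: "?\<sigma> M \<in> MIM_class E u v q p" if M: "M \<in> MIM_class E u v p q" for p q M
  proof -
    have "maximal_induced_matching E M" using M unfolding MIM_class_def MIM_def by simp
    then have "?\<sigma> M \<in> MIM E"
      using maximal_induced_matching_image[OF G transpose_involutory twins_transpose_edge_iff[OF G twins]]
      unfolding MIM_def by simp
    moreover have "w \<in> covered (?\<sigma> M) \<longleftrightarrow> transpose u v w \<in> covered M" for w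
      unfolding covered_image by (metis image_iff transpose_involutory)
    ultimately show ?thesis using M unfolding MIM_class_def by simp
  qed
  have "bij_betw ?\<sigma> (MIM_class E u v p q) (MIM_class E u v q p)"
    by (rule bij_betw_byWitness[where f' = ?\<sigma>])
      (use maps in \<open>auto simp: edge_image_involution\<close>)
  then show ?thesis by (rule bij_betw_same_card)
qed

lemma shift_edge_iff: "u \<notin> {x, y} \<Longrightarrow> {x, y} \<in> shift E u v \<longleftrightarrow> {x, y} \<in> E"
  unfolding shift_def by auto

lemma shift_edge_at_iff:
  assumes "{u, v} \<in> E" and "x \<noteq> u"
  shows "{u, x} \<in> shift E u v \<longleftrightarrow> {v, x} \<in> E \<or> x = v"
proof -
  have eq: "{u, x} = {u, y} \<longleftrightarrow> x = y" for y
    using \<open>x \<noteq> u\<close> by (auto simp: doubleton_eq_iff)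
  have "{u, x} \<in> shift E u v \<longleftrightarrow>
      ({u, x} \<in> E \<and> x \<notin> nbhd E u - cnbhd E v) \<or> x \<in> nbhd E v - cnbhd E u"
    unfolding shift_def by (auto simp: eq)
  also have "\<dots> \<longleftrightarrow> ({u, x} \<in> E \<and> (x = v \<or> {v, x} \<in> E)) \<or> ({v, x} \<in> E \<and> {u, x} \<notin> E)"
    using \<open>x \<noteq> u\<close> unfolding nbhd_def cnbhd_def by auto
  finally show ?thesis
    using \<open>{u, v} \<in> E\<close> by auto
qed

lemma simple_graph_shift:
  assumes G: "simple_graph V E" and "{u, v} \<in> E"
  shows "simple_graph V (shift E u v)"
proof -
  have "u \<in> V" using simple_graph_edge_subset[OF G \<open>{u, v} \<in> E\<close>] by simp
  have "\<exists>x y. x \<noteq> y \<and> e = {x, y} \<and> x \<in> V \<and> y \<in> V" if e: "e \<in> shift E u v" for e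
  proof (cases "e \<in> E")
    case True
    then show ?thesis using G unfolding simple_graph_def by blast
  next
    case False
    then obtain y where y: "e = {u, y}" "{v, y} \<in> E" "y \<notin> cnbhd E u"
      using e unfolding shift_def nbhd_def by blast
    then have "y \<noteq> u" "y \<in> V"
      using simple_graph_edge_subset[OF G y(2)] unfolding cnbhd_def by auto
    then show ?thesis using y(1) \<open>u \<in> V\<close> by blast
  qed
  then show ?thesis using G unfolding simple_graph_def by blast
qed

lemma shift_agrees_avoiding:
  assumes "u \<notin> S"
  shows "\<forall>x\<in>S. \<forall>y\<in>S. {x, y} \<in> E \<longleftrightarrow> {x, y} \<in> shift E u v"
proof (intro ballI)
  fix x y assume "x \<in> S" "y \<in> S"
  then have "u \<notin> {x, y}" using assms by auto
  then show "{x, y} \<in> E \<longleftrightarrow> {x, y} \<in> shift E u v" by (simp add: shift_edge_iff)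
qed

lemma shift_agrees_apart:
  assumes G: "simple_graph V E" and uv: "{u, v} \<in> E"
    and apart: "\<forall>z\<in>S. z \<noteq> u \<longrightarrow> z \<noteq> v \<longrightarrow> {u, z} \<notin> E \<and> {v, z} \<notin> E"
  shows "\<forall>x\<in>S. \<forall>y\<in>S. {x, y} \<in> E \<longleftrightarrow> {x, y} \<in> shift E u v"
proof -
  have at_u: "{u, z} \<in> E \<longleftrightarrow> {u, z} \<in> shift E u v" if "z \<in> S" for z
  proof (cases "z = u")
    case True
    then show ?thesis
      using simple_graph_no_loop[OF G] simple_graph_no_loop[OF simple_graph_shift[OF G uv]] by simp
  next
    case False
    then show ?thesis using shift_edge_at_iff[OF uv False] apart that uv by auto
  qed
  show ?thesis
  proof (intro ballI)
    fix x y assume "x \<in> S" "y \<in> S"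
    consider "x = u" | "y = u" | "u \<notin> {x, y}" by blast
    then show "{x, y} \<in> E \<longleftrightarrow> {x, y} \<in> shift E u v"
    proof cases
      case 1
      then show ?thesis using at_u[OF \<open>y \<in> S\<close>] by simp
    next
      case 2
      then show ?thesis using at_u[OF \<open>x \<in> S\<close>] by (simp add: insert_commute)
    next
      case 3
      then show ?thesis by (simp add: shift_edge_iff)
    qed
  qed
qed

lemma maximal_induced_matching_shift:
  assumes G: "simple_graph V E" and uv: "{u, v} \<in> E"
    and M: "maximal_induced_matching E M" and u: "u \<notin> covered M"
    and w: "w \<in> covered M" "{u, w} \<in> shift E u v"
  shows "maximal_induced_matching (shift E u v) M"
proof -
  let ?H = "shift E u v"
  have H: "simple_graph V ?H" using simple_graph_shift[OF G uv] .
  have "induced_matching E M" using M unfolding maximal_induced_matching_def by blast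
  then have "induced_matching ?H M"
    using induced_matching_cong[OF G H shift_agrees_avoiding[OF u]] by simp
  moreover have "N = M" if N: "induced_matching ?H N" "M \<subseteq> N" for N
  proof (cases "u \<in> covered N")
    case False
    then have "induced_matching E N"
      using N(1) induced_matching_cong[OF G H shift_agrees_avoiding[OF False]] by simp
    then show ?thesis using maximal_induced_matchingD[OF M _ N(2)] by blast
  next
    case True
    obtain f where f: "f \<in> M" "w \<in> f" using w(1) unfolding covered_def by blast
    then have "w \<in> covered N" using N(2) unfolding covered_def by blast
    then have "{u, w} \<in> N" using N(1) True w(2) induced_matching_iff[OF H] by blast
    moreover have "matching ?H N" using N(1) unfolding induced_matching_def by blast
    moreover have "f \<in> N" using f(1) N(2) by blast
    ultimately have "{u, w} = f" using matching_edge_unique[of ?H N "{u, w}" f w] f(2) by simp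
    then have "u \<in> covered M" using f(1) unfolding covered_def by blast
    with u show ?thesis by contradiction
  qed
  ultimately show ?thesis unfolding maximal_induced_matching_def by blast
qed

lemma MIM_class_v_only_subset_shift:
  assumes G: "simple_graph V E" and uv: "{u, v} \<in> E"
  shows "MIM_class E u v False True \<subseteq> MIM_class (shift E u v) u v False True"
proof
  fix M assume "M \<in> MIM_class E u v False True"
  then have M: "maximal_induced_matching E M" "u \<notin> covered M" "v \<in> covered M"
    unfolding MIM_class_def MIM_def by auto
  have "v \<noteq> u" using uv simple_graph_no_loop[OF G, of u] by auto
  then have "{u, v} \<in> shift E u v" using shift_edge_at_iff[OF uv] by simp
  then have "maximal_induced_matching (shift E u v) M"
    using maximal_induced_matching_shift[OF G uv M] by blast
  then show "M \<in> MIM_class (shift E u v) u v False True"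
    using M unfolding MIM_class_def MIM_def by simp
qed

lemma MIM_class_neither_subset_shift:
  assumes G: "simple_graph V E" and uv: "{u, v} \<in> E"
    and no_W1: "\<not> (\<exists>M\<in>MIM E. covered M \<subseteq> (nbhd E u - cnbhd E v) \<union> (V - (cnbhd E u \<union> cnbhd E v))
                   \<and> covered M \<inter> (nbhd E u - cnbhd E v) \<noteq> {})"
  shows "MIM_class E u v False False \<subseteq> MIM_class (shift E u v) u v False False"
proof
  fix M assume M_in: "M \<in> MIM_class E u v False False"
  then have M: "maximal_induced_matching E M" "u \<notin> covered M" "v \<notin> covered M"
    unfolding MIM_class_def MIM_def by auto
  have "\<exists>w\<in>covered M. {v, w} \<in> E"
  proof (rule ccontr)
    assume no_v: "\<not> (\<exists>w\<in>covered M. {v, w} \<in> E)"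
    show False
    proof (cases "\<exists>w\<in>covered M. {u, w} \<in> E")
      case True
      then obtain w where w: "w \<in> covered M" "{u, w} \<in> E" by blast
      have "M \<subseteq> E"
        using M(1) unfolding maximal_induced_matching_def induced_matching_def matching_def by blast
      then have "covered M \<subseteq> V" by (rule covered_subset_vertices[OF G])
      then have "covered M \<subseteq> (nbhd E u - cnbhd E v) \<union> (V - (cnbhd E u \<union> cnbhd E v))"
        using M(2,3) no_v unfolding nbhd_def cnbhd_def by auto
      moreover have "w \<in> nbhd E u - cnbhd E v"
        using w M(3) no_v unfolding nbhd_def cnbhd_def by auto
      then have "covered M \<inter> (nbhd E u - cnbhd E v) \<noteq> {}" using w(1) by blast
      moreover have "M \<in> MIM E" using M_in unfolding MIM_class_def by simp
      ultimately show False using no_W1 by metis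
    next
      case False
      then have "\<forall>x\<in>{u, v}. \<forall>y\<in>covered M. {x, y} \<notin> E" using no_v by blast
      then have "induced_matching E (insert {u, v} M)"
        using M(1) induced_matching_insert[OF G _ uv] unfolding maximal_induced_matching_def by blast
      then have "insert {u, v} M = M" using maximal_induced_matchingD[OF M(1)] by blast
      then show False using M(2) unfolding covered_def by blast
    qed
  qed
  then obtain w where w: "w \<in> covered M" "{v, w} \<in> E" by blast
  then have "w \<noteq> u" using M(2) by blast
  then have "{u, w} \<in> shift E u v" using shift_edge_at_iff[OF uv] w(2) by simp
  then have "maximal_induced_matching (shift E u v) M"
    using maximal_induced_matching_shift[OF G uv M(1,2) w(1)] by blast
  then show "M \<in> MIM_class (shift E u v) u v False False"
    using M unfolding MIM_class_def MIM_def by simp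
qed

lemma card_MIM_class_both_le_shift:
  assumes G: "simple_graph V E" and uv: "{u, v} \<in> E"
  shows "card (MIM_class E u v True True) \<le> card (MIM_class (shift E u v) u v True True)"
proof -
  let ?H = "shift E u v" and ?C = "MIM_class E u v True True"
  have H: "simple_graph V ?H" using simple_graph_shift[OF G uv] .
  have C: "maximal_induced_matching E M" "{u, v} \<in> M" if "M \<in> ?C" for M
  proof -
    show M: "maximal_induced_matching E M" using that unfolding MIM_class_def MIM_def by simp
    have "u \<in> covered M" "v \<in> covered M" using that unfolding MIM_class_def by simp_all
    then show "{u, v} \<in> M"
      using M uv induced_matching_iff[OF G] unfolding maximal_induced_matching_def by blast
  qed
  have agree: "\<forall>x\<in>covered N. \<forall>y\<in>covered N. {x, y} \<in> E \<longleftrightarrow> {x, y} \<in> ?H"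
    if "M1 \<in> ?C" "M2 \<in> ?C" "N \<subseteq> M1 \<union> M2" for M1 M2 N
  proof (rule shift_agrees_apart[OF G uv], intro ballI impI)
    fix z assume "z \<in> covered N" "z \<noteq> u" "z \<noteq> v"
    then have "z \<in> covered M1 \<or> z \<in> covered M2" using that(3) unfolding covered_def by blast
    then show "{u, z} \<notin> E \<and> {v, z} \<notin> E"
      using induced_matching_edge_isolated[OF G] C that(1,2) \<open>z \<noteq> u\<close> \<open>z \<noteq> v\<close>
      unfolding maximal_induced_matching_def by blast
  qed
  define ext where "ext M = (SOME N. M \<subseteq> N \<and> maximal_induced_matching ?H N)" for M
  have ext: "M \<subseteq> ext M" "maximal_induced_matching ?H (ext M)" if "M \<in> ?C" for M
  proof -
    have "induced_matching ?H M"
      using C(1)[OF that] induced_matching_cong[OF G H agree[OF that that]]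
      unfolding maximal_induced_matching_def by blast
    then obtain N where "M \<subseteq> N" "maximal_induced_matching ?H N"
      using maximal_induced_matching_extend simple_graph_finite_edges[OF H] by blast
    then show "M \<subseteq> ext M" "maximal_induced_matching ?H (ext M)"
      unfolding ext_def by (metis (mono_tags, lifting) someI)+
  qed
  have "ext ` ?C \<subseteq> MIM_class ?H u v True True"
  proof
    fix N assume "N \<in> ext ` ?C"
    then obtain M where M: "M \<in> ?C" "N = ext M" by blast
    then have "covered M \<subseteq> covered N" using ext(1) unfolding covered_def by blast
    then show "N \<in> MIM_class ?H u v True True"
      using M ext(2) unfolding MIM_class_def MIM_def by auto
  qed
  moreover have "inj_on ext ?C"
  proof (rule inj_onI)
    fix M1 M2 assume M: "M1 \<in> ?C" "M2 \<in> ?C" "ext M1 = ext M2"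
    then have "M1 \<union> M2 \<subseteq> ext M1" using ext(1) by blast
    then have "induced_matching ?H (M1 \<union> M2)"
      using induced_matching_subset[OF H] ext(2)[OF M(1)] unfolding maximal_induced_matching_def by blast
    then have "induced_matching E (M1 \<union> M2)"
      using induced_matching_cong[OF G H agree[OF M(1,2) subset_refl]] by simp
    then have "M1 \<union> M2 = M1" "M1 \<union> M2 = M2"
      using maximal_induced_matchingD C(1) M(1,2) by blast+
    then show "M1 = M2" by simp
  qed
  moreover have "finite (MIM_class ?H u v True True)"
    using finite_MIM[OF simple_graph_finite_edges[OF H]] unfolding MIM_class_def by simp
  ultimately show ?thesis by (simp add: card_inj_on_le)
qed

lemma card_MIM_shift_lower_bound:
  assumes G: "simple_graph V E" and uv: "{u, v} \<in> E"
    and no_W1: "\<not> (\<exists>M\<in>MIM E. covered M \<subseteq> (nbhd E u - cnbhd E v) \<union> (V - (cnbhd E u \<union> cnbhd E v))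
                   \<and> covered M \<inter> (nbhd E u - cnbhd E v) \<noteq> {})"
  shows "card (MIM_class E u v True True) + 2 * card (MIM_class E u v False True)
    + card (MIM_class E u v False False) \<le> card (MIM (shift E u v))"
proof -
  let ?H = "shift E u v"
  have H: "simple_graph V ?H" using simple_graph_shift[OF G uv] .
  have fin: "finite (MIM ?H)" using finite_MIM[OF simple_graph_finite_edges[OF H]] .
  then have fin_class: "finite (MIM_class ?H u v p q)" for p q
    unfolding MIM_class_def by simp
  have "u \<noteq> v" using uv simple_graph_no_loop[OF G, of u] by auto
  have "{u, w} \<in> ?H \<longleftrightarrow> {v, w} \<in> ?H" if "w \<noteq> u" "w \<noteq> v" for w
  proof -
    have "u \<notin> {v, w}" using \<open>u \<noteq> v\<close> that by auto
    then show ?thesis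
      using shift_edge_at_iff[OF uv \<open>w \<noteq> u\<close>] shift_edge_iff[OF \<open>u \<notin> {v, w}\<close>, of E v] \<open>w \<noteq> v\<close>
      by simp
  qed
  then have twins: "card (MIM_class ?H u v True False) = card (MIM_class ?H u v False True)"
    by (rule card_MIM_class_twins[OF H])
  have "card (MIM_class E u v False True) \<le> card (MIM_class ?H u v False True)"
    using card_mono[OF fin_class MIM_class_v_only_subset_shift[OF G uv]] .
  moreover have "card (MIM_class E u v False False) \<le> card (MIM_class ?H u v False False)"
    using card_mono[OF fin_class MIM_class_neither_subset_shift[OF G uv no_W1]] .
  moreover note card_MIM_class_both_le_shift[OF G uv]
  ultimately show ?thesis
    using card_MIM_classes[OF fin, of u v] twins by linarith
qed

theorem lemma2p1:
  fixes V :: "'a set" and E :: "'a set set" and u v :: 'a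
  assumes G: "simple_graph V E"
    and uv: "{u, v} \<in> E"
  defines "W1 \<equiv> nbhd E u - cnbhd E v"
    and "W2 \<equiv> nbhd E u \<inter> nbhd E v"
    and "W3 \<equiv> nbhd E v - cnbhd E u"
    and "W4 \<equiv> V - (cnbhd E u \<union> cnbhd E v)"
  assumes h1: "\<not> (\<exists>M\<in>MIM E. covered M \<subseteq> W1 \<union> W4 \<and> covered M \<inter> W1 \<noteq> {})"
    and h3: "\<not> (\<exists>M\<in>MIM E. covered M \<subseteq> W3 \<union> W4 \<and> covered M \<inter> W3 \<noteq> {})"
  shows "card (MIM (shift E u v)) \<ge> card (MIM E) \<or> card (MIM (shift E v u)) \<ge> card (MIM E)"
proof -
  have vu: "{v, u} \<in> E" using uv by (simp add: insert_commute)
  have W4: "W4 = V - (cnbhd E v \<union> cnbhd E u)" unfolding W4_def by blast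
  have to_u: "card (MIM_class E u v True True) + 2 * card (MIM_class E u v False True)
      + card (MIM_class E u v False False) \<le> card (MIM (shift E u v))"
    and to_v: "card (MIM_class E v u True True) + 2 * card (MIM_class E v u False True)
      + card (MIM_class E v u False False) \<le> card (MIM (shift E v u))"
    using card_MIM_shift_lower_bound[OF G uv h1[unfolded W1_def W4_def]]
      card_MIM_shift_lower_bound[OF G vu h3[unfolded W3_def W4]] by simp_all
  have "card (MIM E) = card (MIM_class E u v True True) + card (MIM_class E u v True False)
      + card (MIM_class E u v False True) + card (MIM_class E u v False False)"
    using card_MIM_classes[OF finite_MIM[OF simple_graph_finite_edges[OF G]]] .
  then show ?thesis using to_u to_v unfolding MIM_class_commute[of E v u] by linarith
qed

end
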